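(* Let $G$ be a circle and let $x_1,\dots,x_n,y_1,\dots,y_n\in G$ be arbitrary (not necessarily distinct). Then there exists $i\in\{1,\dots,n\}$ such that $$\sum_{k=1}^n d(x_i,x_k)\le\sum_{k=1}^n d(x_i,y_k).$$
   Context: A circle is a network consisting of a single closed simple curve (e.g. the unit circle $S^1$); $d(x,y)$ denotes the length of the shorter arc between $x$ and $y$. *)

theory Defs
  imports Complex_Main
begin

text \<open>A circle of circumference L > 0 is modelled (up to isometry) by the
  arc-length parametrisation: a point is given by a real coordinate t, and
  coordinates differing by a multiple of L denote the same point.
  circ_dist L x y is the length of the shorter arc between the points with
  coordinates x and y.\<close>

definition circ_dist :: "real \<Rightarrow> real \<Rightarrow> real \<Rightarrow> real" where
  "circ_dist L x y = (let t = L * frac ((x - y) / L) in min t (L - t))"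

end

theory Submission
  imports Defs
begin

text \<open>
  We parametrise the circle of circumference L by arc length and study the function
  F(p) = \<Sum>k d(p, y k) - \<Sum>k d(p, x k). If the theorem failed, F would be negative at every
  x i; since d(p + L/2, z) = L/2 - d(p, z), F is antisymmetric under the antipodal map and
  hence positive at every antipode x i + L/2. Cut the circle at all points x k, y k and their
  antipodes. On each resulting arc every d(-, z) is affine with slope \<plusminus>1, so F is affine.
  The sum, over the arcs, of the slope of F times the drop of the indicator [F < 0] is
  nonnegative termwise and positive on an arc where F turns from negative to nonnegative,
  which exists because F changes sign. Expanding F into its distance functions and summing
  by parts, the contribution of each d(-, z) is 2([F(z) < 0] - [F(z + L/2) < 0]), i.e.
  exactly 2 for z = x k and at most 2 for z = y k; hence the total is at most 0, a
  contradiction.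
\<close>

definition wrap :: "real \<Rightarrow> real \<Rightarrow> real" where
  "wrap L v = v - L * of_int \<lfloor>v / L\<rfloor>"

lemma circ_dist_wrap:
  assumes "L > 0"
  shows "circ_dist L p z = min (wrap L (p - z)) (L - wrap L (p - z))"
proof -
  have "L * ((p - z) / L) = p - z" using assms by simp
  thus ?thesis unfolding circ_dist_def wrap_def frac_def Let_def by (simp add: right_diff_distrib)
qed

lemma wrap_bounds:
  assumes "L > 0"
  shows "0 \<le> wrap L v" "wrap L v < L"
proof -
  have lo: "of_int \<lfloor>v / L\<rfloor> \<le> v / L" and hi: "v / L < of_int \<lfloor>v / L\<rfloor> + 1" by linarith+
  have "of_int \<lfloor>v / L\<rfloor> * L \<le> v" using lo pos_le_divide_eq[OF assms] by blast
  moreover have "v < (of_int \<lfloor>v / L\<rfloor> + 1) * L" using hi pos_divide_less_eq[OF assms] by blast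
  ultimately show "0 \<le> wrap L v" "wrap L v < L" unfolding wrap_def by (simp_all add: algebra_simps)
qed

lemma wrap_eqI:
  assumes "L > 0" "a = b + L * of_int k"
  shows "wrap L a = wrap L b"
proof -
  have "a / L = b / L + of_int k" using assms by (simp add: field_simps)
  hence "\<lfloor>a / L\<rfloor> = \<lfloor>b / L\<rfloor> + k" by simp
  thus ?thesis using assms(2) unfolding wrap_def by (simp add: algebra_simps)
qed

lemma wrap_id:
  assumes "L > 0" "0 \<le> v" "v < L"
  shows "wrap L v = v"
proof -
  have "\<lfloor>v / L\<rfloor> = 0" using assms by (simp add: floor_eq_iff field_simps)
  thus ?thesis unfolding wrap_def by simp
qed

lemma wrap_decomp: "v = wrap L v + L * of_int \<lfloor>v / L\<rfloor>"
  unfolding wrap_def by simp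

lemma wrap_diff_wrap:
  assumes "L > 0"
  shows "wrap L (a - wrap L z) = wrap L (a - z)"
  by (rule wrap_eqI[OF assms, of _ _ "\<lfloor>z / L\<rfloor>"]) (simp add: wrap_def)

lemma wrap_diff_cases:
  assumes "L > 0" "0 \<le> a" "a < L" "0 \<le> b" "b < L"
  shows "wrap L (a - b) = (if b \<le> a then a - b else a - b + L)"
proof (cases "b \<le> a")
  case True thus ?thesis using assms by (simp add: wrap_id)
next
  case False
  have "wrap L (a - b) = wrap L (a - b + L)" by (rule wrap_eqI[OF assms(1), of _ _ "-1"]) simp
  also have "\<dots> = a - b + L" using assms False by (intro wrap_id) auto
  finally show ?thesis using False by simp
qed

lemma wrap_add_half:
  assumes "L > 0"
  shows "wrap L (z + L/2) = (if wrap L z < L/2 then wrap L z + L/2 else wrap L z - L/2)"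
proof -
  have b: "0 \<le> wrap L z" "wrap L z < L" using wrap_bounds[OF assms] by auto
  show ?thesis
  proof (cases "wrap L z < L/2")
    case True
    have "wrap L (z + L/2) = wrap L (wrap L z + L/2)"
      by (rule wrap_eqI[OF assms, of _ _ "\<lfloor>z / L\<rfloor>"]) (simp add: wrap_def)
    also have "\<dots> = wrap L z + L/2" using True b assms by (intro wrap_id) auto
    finally show ?thesis using True by simp
  next
    case False
    have "wrap L (z + L/2) = wrap L (wrap L z - L/2)"
      by (rule wrap_eqI[OF assms, of _ _ "\<lfloor>z / L\<rfloor> + 1"]) (simp add: wrap_def algebra_simps)
    also have "\<dots> = wrap L z - L/2" using False b assms by (intro wrap_id) auto
    finally show ?thesis using False by simp
  qed
qed

lemma circ_dist_shift:
  assumes "L > 0"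
  shows "circ_dist L (p + L * of_int k) z = circ_dist L p z"
proof -
  have "wrap L (p + L * of_int k - z) = wrap L (p - z)" by (rule wrap_eqI[OF assms, of _ _ k]) simp
  thus ?thesis using assms by (simp add: circ_dist_wrap)
qed

lemma circ_dist_wrap_left:
  assumes "L > 0"
  shows "circ_dist L (wrap L p) z = circ_dist L p z"
  using circ_dist_shift[OF assms, of "wrap L p" "\<lfloor>p / L\<rfloor>" z] wrap_decomp[of p L] by simp

lemma circ_dist_antipode:
  assumes "L > 0"
  shows "circ_dist L (p + L/2) z = L/2 - circ_dist L p z"
proof -
  define t where "t = wrap L (p - z)"
  have t: "0 \<le> t" "t < L" using wrap_bounds[OF assms] t_def by auto
  have "wrap L (p + L/2 - z) = wrap L ((p - z) + L/2)" by (simp add: algebra_simps)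
  also have "\<dots> = (if t < L/2 then t + L/2 else t - L/2)"
    using wrap_add_half[OF assms] t_def by simp
  finally show ?thesis using t assms by (simp add: circ_dist_wrap t_def[symmetric])
qed

text \<open>The right derivative of d(-, z) at p: it is +1 while moving away from z
  (offset in [0, L/2)) and -1 while moving towards it.\<close>
definition arc_sign :: "real \<Rightarrow> real \<Rightarrow> real \<Rightarrow> real" where
  "arc_sign L p z = (if wrap L (p - z) < L/2 then 1 else -1)"

text \<open>d(-, z) is affine on any interval whose interior avoids z and its antipode,
  the two points where its slope changes.\<close>
lemma circ_dist_linear_on_gap:
  assumes L: "L > 0" and "a < b"
    and gap: "\<And>v. a < v \<Longrightarrow> v < b \<Longrightarrow> wrap L v \<noteq> wrap L z \<and> wrap L v \<noteq> wrap L (z + L/2)"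
  shows "circ_dist L b z - circ_dist L a z = arc_sign L a z * (b - a)"
proof -
  define t where "t = wrap L (a - z)"
  define k where "k = \<lfloor>(a - z) / L\<rfloor>"
  have t: "0 \<le> t" "t < L" using wrap_bounds[OF L] t_def by auto
  have dec: "a - z = t + L * of_int k" using wrap_decomp t_def k_def by simp
  have b_wrap: "wrap L (b - z) = wrap L (t + (b - a))"
    by (rule wrap_eqI[OF L, of _ _ k]) (use dec in \<open>simp add: algebra_simps\<close>)
  show ?thesis
  proof (cases "t < L/2")
    case True
    have "t + (b - a) \<le> L/2"
    proof (rule ccontr)
      assume far: "\<not> t + (b - a) \<le> L/2"
      have "wrap L (a + (L/2 - t)) = wrap L (z + L/2)"
        by (rule wrap_eqI[OF L, of _ _ k]) (use dec in \<open>simp add: algebra_simps\<close>)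
      thus False using gap[of "a + (L/2 - t)"] True far by auto
    qed
    hence "wrap L (b - z) = t + (b - a)" using b_wrap t \<open>a < b\<close> L by (simp add: wrap_id)
    thus ?thesis using True t \<open>t + (b - a) \<le> L/2\<close> L
      by (simp add: circ_dist_wrap arc_sign_def t_def[symmetric])
  next
    case False
    have "t + (b - a) \<le> L"
    proof (rule ccontr)
      assume far: "\<not> t + (b - a) \<le> L"
      have "wrap L (a + (L - t)) = wrap L z"
        by (rule wrap_eqI[OF L, of _ _ "k + 1"]) (use dec in \<open>simp add: algebra_simps\<close>)
      thus False using gap[of "a + (L - t)"] t far by auto
    qed
    have "wrap L (b - z) = (if t + (b - a) < L then t + (b - a) else 0)"
    proof (cases "t + (b - a) < L")
      case True thus ?thesis using b_wrap t \<open>a < b\<close> L by (simp add: wrap_id)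
    next
      case False
      hence "t + (b - a) = 0 + L * of_int 1" using \<open>t + (b - a) \<le> L\<close> by simp
      hence "wrap L (t + (b - a)) = wrap L 0" by (rule wrap_eqI[OF L])
      thus ?thesis using b_wrap wrap_id[OF L] False L by simp
    qed
    thus ?thesis using False t \<open>t + (b - a) \<le> L\<close> \<open>a < b\<close> L
      by (simp add: circ_dist_wrap arc_sign_def t_def[symmetric])
  qed
qed

lemma cyclic_sign_change:
  fixes P :: "nat \<Rightarrow> bool"
  assumes "P m = P 0" "P J" "\<not> P J'" "J < m" "J' < m"
  shows "\<exists>j<m. P j \<and> \<not> P (Suc j)"
proof (rule ccontr)
  assume "\<not> ?thesis"
  hence step: "\<And>j. j < m \<Longrightarrow> P j \<Longrightarrow> P (Suc j)" by blast
  have up: "J + d \<le> m \<Longrightarrow> P (J + d)" for d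
    by (induction d) (use assms step in auto)
  have "P 0" using up[of "m - J"] assms by simp
  have "j \<le> m \<Longrightarrow> P j" for j
    by (induction j) (use \<open>P 0\<close> step in auto)
  thus False using assms by simp
qed

definition neg_ind :: "real \<Rightarrow> real" where
  "neg_ind t = (if t < 0 then 1 else 0)"

text \<open>On an affine piece with slope \<sigma> the sign of \<sigma> dictates in which direction the
  sign of the function may change, so the weighted indicator jump is never negative, and it
  is positive when the function turns from negative to nonnegative.\<close>
lemma crossing_term:
  assumes "q < q'" "g' - g = \<sigma> * (q' - q)"
  shows "0 \<le> \<sigma> * (neg_ind g - neg_ind g')"
    and "g < 0 \<Longrightarrow> 0 \<le> g' \<Longrightarrow> 0 < \<sigma> * (neg_ind g - neg_ind g')"
proof -
  have up: "0 < \<sigma>" if "g < 0" "0 \<le> g'"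
    using assms that by (smt (verit) mult_nonpos_nonneg)
  have down: "\<sigma> < 0" if "0 \<le> g" "g' < 0"
    using assms that by (smt (verit) mult_nonneg_nonneg)
  show "0 \<le> \<sigma> * (neg_ind g - neg_ind g')"
    using up down unfolding neg_ind_def by (cases "g < 0"; cases "g' < 0") auto
  show "g < 0 \<Longrightarrow> 0 \<le> g' \<Longrightarrow> 0 < \<sigma> * (neg_ind g - neg_ind g')"
    using up unfolding neg_ind_def by simp
qed

lemma crossing_sum_pos:
  fixes g q \<sigma> :: "nat \<Rightarrow> real"
  assumes mono: "\<And>j. j < m \<Longrightarrow> q j < q (Suc j)"
    and slope: "\<And>j. j < m \<Longrightarrow> g (Suc j) - g j = \<sigma> j * (q (Suc j) - q j)"
    and cyc: "g m < 0 \<longleftrightarrow> g 0 < 0"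
    and "g J < 0" "0 \<le> g J'" "J < m" "J' < m"
  shows "0 < (\<Sum>j<m. \<sigma> j * (neg_ind (g j) - neg_ind (g (Suc j))))"
proof -
  obtain j0 where j0: "j0 < m" "g j0 < 0" "\<not> g (Suc j0) < 0"
    using cyclic_sign_change[of "\<lambda>j. g j < 0" m J J'] assms by auto
  show ?thesis
  proof (rule sum_pos2)
    show "0 < \<sigma> j0 * (neg_ind (g j0) - neg_ind (g (Suc j0)))"
      using crossing_term(2)[OF mono slope] j0 by simp
  qed (use j0 crossing_term(1)[OF mono slope] in auto)
qed

lemma sum_telescope_on_interval:
  fixes A s :: "nat \<Rightarrow> real"
  assumes "J1 \<le> J2" "J2 \<le> m" "\<And>j. j < m \<Longrightarrow> s j = (if J1 \<le> j \<and> j < J2 then 1 else -1)"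
  shows "(\<Sum>j<m. s j * (A j - A (Suc j))) = 2 * (A J1 - A J2) - (A 0 - A m)"
proof -
  have "(\<Sum>j<m. s j * (A j - A (Suc j))) =
        (\<Sum>j<m. 2 * (if j \<in> {J1..<J2} then A j - A (Suc j) else 0) - (A j - A (Suc j)))"
    by (rule sum.cong) (auto simp: assms(3))
  also have "\<dots> = 2 * (\<Sum>j<m. (if j \<in> {J1..<J2} then A j - A (Suc j) else 0)) - (\<Sum>j<m. A j - A (Suc j))"
    by (simp add: sum_subtractf sum_distrib_left)
  also have "(\<Sum>j<m. (if j \<in> {J1..<J2} then A j - A (Suc j) else 0)) = (\<Sum>j\<in>{J1..<J2}. A j - A (Suc j))"
    using assms by (subst sum.If_cases) (auto intro!: sum.cong)
  also have "\<dots> = A J1 - A J2"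
    using sum_Suc_diff'[OF assms(1), of "\<lambda>j. - A j"] by (simp add: algebra_simps)
  also have "(\<Sum>j<m. A j - A (Suc j)) = A 0 - A m" by (rule sum_lessThan_telescope')
  finally show ?thesis .
qed

lemma sum_telescope_off_interval:
  fixes A s :: "nat \<Rightarrow> real"
  assumes "J2 \<le> J1" "J1 \<le> m" "\<And>j. j < m \<Longrightarrow> s j = (if J2 \<le> j \<and> j < J1 then -1 else 1)"
  shows "(\<Sum>j<m. s j * (A j - A (Suc j))) = 2 * (A J1 - A J2) + (A 0 - A m)"
proof -
  have "(\<Sum>j<m. (- s j) * (A j - A (Suc j))) = 2 * (A J2 - A J1) - (A 0 - A m)"
    by (rule sum_telescope_on_interval) (use assms in auto)
  thus ?thesis by (simp add: sum_negf)
qed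

text \<open>A finite set S of points of [0, L), listed increasingly as q 0 < ... < q (m - 1),
  closed up by q m = q 0 + L: the nodes q j cut the circle into m arcs [q j, q (j + 1)].\<close>
locale circle_partition =
  fixes L :: real and S :: "real set" and q :: "nat \<Rightarrow> real" and m :: nat
  assumes L_pos: "L > 0"
    and S_range: "S \<subseteq> {0..<L}"
    and q_strict: "\<And>i j. i < j \<Longrightarrow> j \<le> m \<Longrightarrow> q i < q j"
    and q_last: "q m = q 0 + L"
    and q_image: "q ` {..<m} = S"
begin

lemma q_in_S: "j < m \<Longrightarrow> q j \<in> S"
  using q_image by blast

lemma S_in_q: "s \<in> S \<Longrightarrow> \<exists>j<m. q j = s"
  using q_image by force

lemma q_less_iff: "i \<le> m \<Longrightarrow> j \<le> m \<Longrightarrow> q i < q j \<longleftrightarrow> i < j"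
  using q_strict by (metis linorder_neqE_nat order_less_asym order_less_irrefl)

lemma q_le_iff: "i \<le> m \<Longrightarrow> j \<le> m \<Longrightarrow> q i \<le> q j \<longleftrightarrow> i \<le> j"
  using q_less_iff[of j i] by (simp add: not_less[symmetric])

lemma q_range: "j < m \<Longrightarrow> 0 \<le> q j \<and> q j < L"
  using q_in_S S_range by fastforce

lemma gap:
  assumes "j < m" "q j < v" "v < q (Suc j)"
  shows "wrap L v \<notin> S"
proof
  assume "wrap L v \<in> S"
  then obtain i where i: "i < m" "q i = wrap L v" using S_in_q by blast
  have m_pos: "0 < m" using assms by simp
  show False
  proof (cases "v < L")
    case True
    have "0 \<le> v" using q_range[OF assms(1)] assms by auto
    hence "q i = v" using i wrap_id[OF L_pos] True by simp
    hence "j < i" "i < Suc j" using q_less_iff[of j i] q_less_iff[of i "Suc j"] assms i by auto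
    thus False by simp
  next
    case False
    hence last: "Suc j = m"
      using q_range q_strict[of "Suc j" m] assms q_last by (cases "Suc j < m") force+
    have "wrap L v = wrap L (v - L)" by (rule wrap_eqI[OF L_pos, of _ _ 1]) simp
    also have "\<dots> = v - L" using False assms q_last last q_range[OF m_pos] L_pos by (intro wrap_id) auto
    finally have "q i < q 0" using i assms last q_last by simp
    thus False using q_less_iff[of i 0] i by simp
  qed
qed

lemma circ_dist_slope:
  assumes "wrap L z \<in> S" "wrap L (z + L/2) \<in> S" "j < m"
  shows "circ_dist L (q (Suc j)) z - circ_dist L (q j) z = arc_sign L (q j) z * (q (Suc j) - q j)"
proof (rule circ_dist_linear_on_gap[OF L_pos q_strict[of j "Suc j"]])
  fix v assume "q j < v" "v < q (Suc j)"
  thus "wrap L v \<noteq> wrap L z \<and> wrap L v \<noteq> wrap L (z + L/2)" using gap[of j v] assms by metis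
qed (use assms in auto)

text \<open>Abel summation of the slopes of d(-, z) against the jumps of an L-periodic
  function g sampled at the nodes: since the slope is +1 on the half circle from z to its
  antipode and -1 on the other half, only the values of g at z and at z + L/2 survive.\<close>
lemma arc_sign_sum:
  fixes g :: "real \<Rightarrow> real"
  assumes z: "wrap L z \<in> S" "wrap L (z + L/2) \<in> S"
    and g_wrap: "\<And>p. g (wrap L p) = g p"
  shows "(\<Sum>j<m. arc_sign L (q j) z * (g (q j) - g (q (Suc j)))) = 2 * (g z - g (z + L/2))"
proof -
  define A where "A j = g (q j)" for j
  have "g (q 0 + L) = g (q 0)"
    using g_wrap wrap_eqI[OF L_pos, of "q 0 + L" "q 0" 1] by (metis mult.right_neutral of_int_1)
  hence A_cyc: "A m = A 0" unfolding A_def q_last by simp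
  obtain J1 where J1: "J1 < m" "q J1 = wrap L z" using S_in_q z by blast
  obtain J2 where J2: "J2 < m" "q J2 = wrap L (z + L/2)" using S_in_q z by blast
  have A_J: "A J1 = g z" "A J2 = g (z + L/2)" unfolding A_def J1 J2 g_wrap by simp_all
  have wz: "0 \<le> wrap L z" "wrap L z < L" using wrap_bounds[OF L_pos] by auto
  have offset: "wrap L (q j - z) = (if wrap L z \<le> q j then q j - wrap L z else q j - wrap L z + L)"
    if "j < m" for j
    using wrap_diff_wrap[OF L_pos, of "q j" z] wrap_diff_cases[OF L_pos _ _ wz, of "q j"] q_range[OF that]
    by simp
  show ?thesis
  proof (cases "wrap L z < L/2")
    case True
    have half: "wrap L (z + L/2) = wrap L z + L/2" using wrap_add_half[OF L_pos] True by simp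
    have "J1 < J2" using q_less_iff[of J1 J2] J1 J2 half L_pos by simp
    have "(\<Sum>j<m. arc_sign L (q j) z * (A j - A (Suc j))) = 2 * (A J1 - A J2) - (A 0 - A m)"
    proof (rule sum_telescope_on_interval)
      fix j assume j: "j < m"
      show "arc_sign L (q j) z = (if J1 \<le> j \<and> j < J2 then 1 else -1)"
        using q_le_iff[of J1 j] q_less_iff[of j J2] J1 J2 half True wz q_range[OF j] offset[OF j] j
        unfolding arc_sign_def by auto
    qed (use \<open>J1 < J2\<close> J2 in auto)
    thus ?thesis using A_cyc A_J unfolding A_def by simp
  next
    case False
    have half: "wrap L (z + L/2) = wrap L z - L/2" using wrap_add_half[OF L_pos] False by simp
    have "J2 < J1" using q_less_iff[of J2 J1] J1 J2 half L_pos by simp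
    have "(\<Sum>j<m. arc_sign L (q j) z * (A j - A (Suc j))) = 2 * (A J1 - A J2) + (A 0 - A m)"
    proof (rule sum_telescope_off_interval)
      fix j assume j: "j < m"
      show "arc_sign L (q j) z = (if J2 \<le> j \<and> j < J1 then -1 else 1)"
        using q_less_iff[of j J1] q_le_iff[of J2 j] J1 J2 half False wz q_range[OF j] offset[OF j] j
        unfolding arc_sign_def by auto
    qed (use \<open>J2 < J1\<close> J1 in auto)
    thus ?thesis using A_cyc A_J unfolding A_def by simp
  qed
qed

end

lemma circle_partition_exists:
  assumes "L > 0" "finite S" "S \<noteq> {}" "S \<subseteq> {0..<L}"
  obtains q m where "circle_partition L S q m"
proof -
  define xs where "xs = sorted_list_of_set S"
  define m where "m = length xs"
  define q where "q j = (if j < m then xs ! j else xs ! 0 + L)" for j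
  have set_xs: "set xs = S" and sorted: "sorted_wrt (<) xs"
    unfolding xs_def using assms(2) by (simp_all add: strict_sorted_list_of_set)
  have m_pos: "0 < m" using assms(3) set_xs unfolding m_def by (cases xs) auto
  have img: "q ` {..<m} = S"
    using set_xs unfolding q_def m_def by (force simp: in_set_conv_nth)
  have strict: "q i < q j" if "i < j" "j \<le> m" for i j
  proof (cases "j < m")
    case True thus ?thesis using that sorted sorted_wrt_nth_less unfolding q_def m_def by fastforce
  next
    case False
    hence "q i \<in> S" "q 0 \<in> S" "q j = q 0 + L" using img that m_pos unfolding q_def by auto
    moreover from this assms(4) have "q i < L" "0 \<le> q 0" by auto
    ultimately show ?thesis by simp
  qed
  have "circle_partition L S q m"
    by unfold_locales (use assms strict img m_pos in \<open>auto simp: q_def\<close>)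
  thus thesis by (rule that)
qed

text \<open>Counting the sign changes of F weighted by
  its slopes gives a positive quantity, which by Abel summation equals twice the weighted
  count of the points z k at which F is negative while it is nonnegative at their antipodes.\<close>
lemma sign_change_balance:
  fixes K :: "'k set" and w z :: "'k \<Rightarrow> real" and F :: "real \<Rightarrow> real"
  assumes L: "L > 0" and K: "finite K"
    and F_eq: "\<And>p. F p = (\<Sum>k\<in>K. w k * circ_dist L p (z k))"
    and neg: "F a < 0" and nonneg: "0 \<le> F b"
  shows "0 < (\<Sum>k\<in>K. w k * (neg_ind (F (z k)) - neg_ind (F (z k + L/2))))"
proof -
  define S where "S = wrap L ` ({a, b} \<union> z ` K \<union> (\<lambda>k. z k + L/2) ` K)"
  have "finite S" "S \<noteq> {}" "S \<subseteq> {0..<L}"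
    unfolding S_def using K wrap_bounds[OF L] by auto
  then obtain q m where "circle_partition L S q m"
    using circle_partition_exists[OF L] by blast
  then interpret P: circle_partition L S q m .
  have z_in_S: "wrap L (z k) \<in> S" "wrap L (z k + L/2) \<in> S" if "k \<in> K" for k
    unfolding S_def using that by auto
  have F_wrap: "F (wrap L p) = F p" for p
    using F_eq circ_dist_wrap_left[OF L] by simp
  define \<sigma> where "\<sigma> j = (\<Sum>k\<in>K. w k * arc_sign L (q j) (z k))" for j
  have slope: "F (q (Suc j)) - F (q j) = \<sigma> j * (q (Suc j) - q j)" if "j < m" for j
  proof -
    have "F (q (Suc j)) - F (q j) = (\<Sum>k\<in>K. w k * (circ_dist L (q (Suc j)) (z k) - circ_dist L (q j) (z k)))"
      unfolding F_eq by (simp add: sum_subtractf right_diff_distrib)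
    also have "\<dots> = (\<Sum>k\<in>K. w k * (arc_sign L (q j) (z k) * (q (Suc j) - q j)))"
      using P.circ_dist_slope[OF z_in_S that] by simp
    finally show ?thesis unfolding \<sigma>_def by (simp add: sum_distrib_right mult.assoc)
  qed
  have cyc: "F (q m) = F (q 0)"
    using F_eq circ_dist_shift[OF L, of "q 0" 1] P.q_last by simp
  obtain J J' where J: "J < m" "q J = wrap L a" and J': "J' < m" "q J' = wrap L b"
    using P.S_in_q unfolding S_def by blast
  define N where "N p = neg_ind (F p)" for p
  have "0 < (\<Sum>j<m. \<sigma> j * (N (q j) - N (q (Suc j))))"
    unfolding N_def
    by (rule crossing_sum_pos[where g = "\<lambda>j. F (q j)" and J = J and J' = J'])
       (use P.q_strict slope cyc J J' F_wrap neg nonneg in auto)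
  also have "\<dots> = (\<Sum>k\<in>K. w k * (\<Sum>j<m. arc_sign L (q j) (z k) * (N (q j) - N (q (Suc j)))))"
    unfolding \<sigma>_def by (simp add: sum_distrib_left sum_distrib_right mult.assoc sum.swap[of _ K])
  also have "\<dots> = (\<Sum>k\<in>K. w k * (2 * (N (z k) - N (z k + L/2))))"
    using P.arc_sign_sum[OF z_in_S, of _ N] F_wrap unfolding N_def by simp
  also have "\<dots> = 2 * (\<Sum>k\<in>K. w k * (N (z k) - N (z k + L/2)))"
    by (simp add: sum_distrib_left mult.left_commute)
  finally show ?thesis unfolding N_def by simp
qed

text \<open>The theorem: otherwise F = \<Sum>k d(-, y k) - \<Sum>k d(-, x k) is negative at every x i
  and, being antisymmetric under the antipodal map, nonnegative at every antipode, so the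
  balance of the key lemma is at most n - n = 0.\<close>
theorem theorem3:
  fixes L :: real and n :: nat and x y :: "nat \<Rightarrow> real"
  assumes "L > 0" and "n \<ge> 1"
  shows "\<exists>i\<in>{1..n}. (\<Sum>k=1..n. circ_dist L (x i) (x k)) \<le> (\<Sum>k=1..n. circ_dist L (x i) (y k))"
proof (rule ccontr)
  define F where "F p = (\<Sum>k=1..n. circ_dist L p (y k)) - (\<Sum>k=1..n. circ_dist L p (x k))" for p
  assume "\<not> ?thesis"
  hence F_x: "F (x i) < 0" if "i \<in> {1..n}" for i using that by (auto simp: F_def not_le)
  have F_anti: "F (p + L/2) = - F p" for p
    unfolding F_def using circ_dist_antipode[OF \<open>L > 0\<close>] by (simp add: sum_subtractf)
  define w :: "nat + nat \<Rightarrow> real" where "w = case_sum (\<lambda>_. 1) (\<lambda>_. -1)"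
  define z where "z = case_sum y x"
  have split: "(\<Sum>k\<in>{1..n} <+> {1..n}. w k * h (z k)) = (\<Sum>k=1..n. h (y k)) - (\<Sum>k=1..n. h (x k))"
    for h :: "real \<Rightarrow> real"
    by (simp add: sum.Plus w_def z_def sum_negf comp_def)
  have "0 < (\<Sum>k\<in>{1..n} <+> {1..n}. w k * (neg_ind (F (z k)) - neg_ind (F (z k + L/2))))"
  proof (rule sign_change_balance[OF \<open>L > 0\<close>])
    show "F p = (\<Sum>k\<in>{1..n} <+> {1..n}. w k * circ_dist L p (z k))" for p
      unfolding F_def split ..
    have "F (x 1) < 0" using F_x \<open>n \<ge> 1\<close> by simp
    thus "F (x 1) < 0" "0 \<le> F (x 1 + L/2)" using F_anti by auto
  qed simp
  also have "\<dots> = (\<Sum>k=1..n. neg_ind (F (y k)) - neg_ind (F (y k + L/2)))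
                 - (\<Sum>k=1..n. neg_ind (F (x k)) - neg_ind (F (x k + L/2)))"
    using split[of "\<lambda>p. neg_ind (F p) - neg_ind (F (p + L/2))"] by simp
  also have "\<dots> \<le> (\<Sum>k=1..n. 1) - (\<Sum>k=1..n. 1)"
    using F_x F_anti by (intro diff_mono sum_mono) (force simp: neg_ind_def)+
  finally show False by simp
qed

end
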